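(* Let $d,n,m\geq1$ be integers, and let $\mathsf{M}_1$ be an $n$-outcome POVM and $\mathsf{M}_2$ an $m$-outcome POVM on $\mathbb{C}^d$, and set $$\bar P(\mathsf{M}_1,\mathsf{M}_2)=\frac{1}{2nm}\sum_{x=1}^n\sum_{y=1}^m\big\|\mathsf{M}_1(x)+\mathsf{M}_2(y)\big\|.$$ Then the incompatibility robustness satisfies $$\mathcal{R}(\mathsf{M}_1,\mathsf{M}_2)\geq\frac{2nm\,\bar P(\mathsf{M}_1,\mathsf{M}_2)}{d+nm}-1.$$
   Context: $\|\cdot\|$ is the operator norm. Two POVMs are compatible if there exists a POVM $\mathsf{G}(x,y)$ with marginals $\sum_y\mathsf{G}(x,y)=$ first POVM and $\sum_x\mathsf{G}(x,y)=$ second POVM. The incompatibility robustness is $\mathcal{R}(\mathsf{M}_1,\mathsf{M}_2)=\min\{t\geq0 : \{(\mathsf{M}_i+t\mathsf{N}_i)/(1+t)\}_{i=1,2}$ are compatible for some POVMs $\mathsf{N}_1$ ($n$ outcomes) and $\mathsf{N}_2$ ($m$ outcomes) on $\mathbb{C}^d\}$. *)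

theory Defs
  imports "HOL-Analysis.Analysis"
begin

text \<open>Operators on C^d are d x d complex matrices, with d = CARD('d).\<close>

definition quad_form :: "complex^'d^'d \<Rightarrow> complex^'d \<Rightarrow> complex" where
  "quad_form A v = (\<Sum>i\<in>UNIV. cnj (v $ i) * ((A *v v) $ i))"

definition psd :: "complex^'d^'d \<Rightarrow> bool" where
  "psd A \<longleftrightarrow> (\<forall>v. Im (quad_form A v) = 0 \<and> Re (quad_form A v) \<ge> 0)"

definition is_POVM :: "('x::finite \<Rightarrow> complex^'d^'d) \<Rightarrow> bool" where
  "is_POVM M \<longleftrightarrow> (\<forall>x. psd (M x)) \<and> (\<Sum>x\<in>UNIV. M x) = mat 1"

definition compatible ::
  "('x::finite \<Rightarrow> complex^'d^'d) \<Rightarrow> ('y::finite \<Rightarrow> complex^'d^'d) \<Rightarrow> bool" where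
  "compatible M1 M2 \<longleftrightarrow>
     (\<exists>G :: 'x \<times> 'y \<Rightarrow> complex^'d^'d. is_POVM G \<and>
        (\<forall>x. (\<Sum>y\<in>UNIV. G (x, y)) = M1 x) \<and> (\<forall>y. (\<Sum>x\<in>UNIV. G (x, y)) = M2 y))"

definition opnorm :: "complex^'d^'d \<Rightarrow> real" where
  "opnorm A = onorm (\<lambda>v::complex^'d. A *v v)"

definition incomp_robustness ::
  "('x::finite \<Rightarrow> complex^'d^'d) \<Rightarrow> ('y::finite \<Rightarrow> complex^'d^'d) \<Rightarrow> real" where
  "incomp_robustness M1 M2 = Inf {t::real. t \<ge> 0 \<and>
     (\<exists>(N1 :: 'x \<Rightarrow> complex^'d^'d) (N2 :: 'y \<Rightarrow> complex^'d^'d).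
        is_POVM N1 \<and> is_POVM N2 \<and>
        compatible (\<lambda>x. (1 / (1 + t)) *\<^sub>R (M1 x + t *\<^sub>R N1 x))
                   (\<lambda>y. (1 / (1 + t)) *\<^sub>R (M2 y + t *\<^sub>R N2 y)))}"

definition avg_Pbar ::
  "('x::finite \<Rightarrow> complex^'d^'d) \<Rightarrow> ('y::finite \<Rightarrow> complex^'d^'d) \<Rightarrow> real" where
  "avg_Pbar M1 M2 = (1 / (2 * real CARD('x) * real CARD('y))) *
     (\<Sum>x\<in>UNIV. \<Sum>y\<in>UNIV. opnorm (M1 x + M2 y))"

end

theory Submission
  imports Defs
begin

text \<open>
  Suppose the noisy versions \<open>(M\<^sub>i + t N\<^sub>i)/(1 + t)\<close> have a joint POVM \<open>G\<close>. Since the noise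
  is positive, \<open>M\<^sub>1(x) \<le> (1 + t) \<Sum>\<^sub>y' G(x,y')\<close> and \<open>M\<^sub>2(y) \<le> (1 + t) \<Sum>\<^sub>x' G(x',y)\<close>
  in the Loewner order. Row \<open>x\<close> and column \<open>y\<close> of \<open>G\<close> together contain \<open>G(x,y)\<close> twice and
  every other element at most once, so \<open>M\<^sub>1(x) + M\<^sub>2(y) \<le> (1 + t) (G(x,y) + 1)\<close>. A positive
  operator has norm at most its trace, hence \<open>\<parallel>M\<^sub>1(x) + M\<^sub>2(y)\<parallel> \<le> (1 + t) (1 + tr G(x,y))\<close>,
  and summing over all \<open>x, y\<close> with \<open>\<Sum> tr G(x,y) = d\<close> gives
  \<open>\<Sum>\<^sub>x\<^sub>,\<^sub>y \<parallel>M\<^sub>1(x) + M\<^sub>2(y)\<parallel> \<le> (1 + t) (nm + d)\<close>.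
  The infimum defining the robustness is over a nonempty set: for large \<open>t\<close> suitable noise
  turns both POVMs into the trivial ones \<open>1/n\<close> and \<open>1/m\<close>, which are compatible.
\<close>

definition sesq :: "complex^'n::finite^'n \<Rightarrow> complex^'n \<Rightarrow> complex^'n \<Rightarrow> complex" where
  "sesq A u v = (\<Sum>i\<in>UNIV. cnj (u $ i) * (A *v v) $ i)"

lemma quad_form_eq_sesq: "quad_form A v = sesq A v v"
  by (simp add: quad_form_def sesq_def)

lemma psd_iff_sesq: "psd A \<longleftrightarrow> (\<forall>v. Im (sesq A v v) = 0 \<and> 0 \<le> Re (sesq A v v))"
  by (simp add: psd_def quad_form_eq_sesq)

lemma sesq_expand: "sesq A u v = (\<Sum>i\<in>UNIV. \<Sum>j\<in>UNIV. cnj (u $ i) * A $ i $ j * v $ j)"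
  by (simp add: sesq_def matrix_vector_mult_def sum_distrib_left mult.assoc)

lemma sesq_add_left: "sesq A (u + u') v = sesq A u v + sesq A u' v"
  by (simp add: sesq_expand sum.distrib algebra_simps)

lemma sesq_add_right: "sesq A u (v + v') = sesq A u v + sesq A u v'"
  by (simp add: sesq_expand sum.distrib algebra_simps)

lemma sesq_scale_left: "sesq A (c *s u) v = cnj c * sesq A u v"
  by (simp add: sesq_expand sum_distrib_left algebra_simps)

lemma sesq_scale_right: "sesq A u (c *s v) = c * sesq A u v"
  by (simp add: sesq_expand sum_distrib_left algebra_simps)

lemma sesq_add_matrix: "sesq (A + B) u v = sesq A u v + sesq B u v"
  by (simp add: sesq_expand sum.distrib algebra_simps)

lemma sesq_diff_matrix: "sesq (A - B) u v = sesq A u v - sesq B u v"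
  by (simp add: sesq_expand sum_subtractf algebra_simps)

lemma sesq_scaleR_matrix: "sesq (r *\<^sub>R A) u v = of_real r * sesq A u v"
  by (simp add: sesq_expand sum_distrib_left) (simp add: scaleR_conv_of_real algebra_simps)

lemma sesq_sum_matrix: "finite S \<Longrightarrow> sesq (\<Sum>k\<in>S. A k) u v = (\<Sum>k\<in>S. sesq (A k) u v)"
  by (induction S rule: finite_induct) (simp add: sesq_expand, simp add: sesq_add_matrix)

lemma sesq_conv_mat1: "sesq A u v = sesq (mat 1) u (A *v v)"
  by (simp add: sesq_def)

lemma sesq_mat1_self: "sesq (mat 1) v v = of_real ((norm v)\<^sup>2)"
proof -
  have "(norm v)\<^sup>2 = (\<Sum>i\<in>UNIV. (cmod (v $ i))\<^sup>2)"
    unfolding norm_vec_def L2_set_def by (simp add: sum_nonneg)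
  then show ?thesis
    by (simp add: sesq_def mult.commute complex_norm_square[symmetric])
qed

lemma matrix_vector_mult_axis_component: "(A *v axis j 1) $ i = A $ i $ j"
proof -
  have "A $ i $ k * axis j 1 $ k = (if k = j then A $ i $ j else 0)" for k
    by (simp add: axis_def)
  then show ?thesis by (simp add: matrix_vector_mult_def)
qed

lemma sesq_axis_left: "sesq A (axis i 1) v = (A *v v) $ i"
proof -
  have "cnj (axis i 1 $ k) * (A *v v) $ k = (if k = i then (A *v v) $ i else 0)" for k
    by (simp add: axis_def)
  then show ?thesis by (simp add: sesq_def)
qed

lemma sesq_axis: "sesq A (axis i 1) (axis i 1) = A $ i $ i"
  by (simp add: sesq_axis_left matrix_vector_mult_axis_component)

lemma trace_sum: "finite S \<Longrightarrow> trace (\<Sum>k\<in>S. A k) = (\<Sum>k\<in>S. trace (A k))"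
  by (induction S rule: finite_induct) (simp_all add: trace_def sum.distrib)

lemma psd_sesq_self_real: "psd A \<Longrightarrow> Im (sesq A v v) = 0"
  by (simp add: psd_iff_sesq)

lemma psd_sesq_self_nonneg: "psd A \<Longrightarrow> 0 \<le> Re (sesq A v v)"
  by (simp add: psd_iff_sesq)

lemma psd_mat1: "psd (mat 1)"
  by (simp add: psd_iff_sesq sesq_mat1_self)

lemma psd_add: "psd A \<Longrightarrow> psd B \<Longrightarrow> psd (A + B)"
  by (simp add: psd_iff_sesq sesq_add_matrix)

lemma psd_scaleR: "0 \<le> r \<Longrightarrow> psd A \<Longrightarrow> psd (r *\<^sub>R A)"
  by (simp add: psd_iff_sesq sesq_scaleR_matrix)

lemma psd_trace_nonneg: "psd A \<Longrightarrow> 0 \<le> Re (trace A)"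
  unfolding trace_def Re_sum by (rule sum_nonneg) (metis psd_sesq_self_nonneg sesq_axis)

text \<open>Polarization: the quadratic forms at \<open>u + v\<close> and \<open>u + \<i>v\<close> are real.\<close>
lemma psd_sesq_swap:
  assumes "psd A"
  shows "sesq A v u = cnj (sesq A u v)"
proof -
  have self_real: "Im (sesq A w w) = 0" for w
    using assms by (rule psd_sesq_self_real)
  have expand: "sesq A (u + c *s v) (u + c *s v)
      = sesq A u u + c * sesq A u v + cnj c * sesq A v u + cnj c * c * sesq A v v" for c
    by (simp add: sesq_add_left sesq_add_right sesq_scale_left sesq_scale_right algebra_simps)
  have "Im (sesq A u v + sesq A v u) = 0"
    using self_real[of "u + 1 *s v"] self_real[of u] self_real[of v] expand[of 1] by simp
  moreover have "Re (sesq A u v - sesq A v u) = 0"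
    using self_real[of "u + \<i> *s v"] self_real[of u] self_real[of v] expand[of \<i>] by simp
  ultimately show ?thesis
    by (simp add: complex_eq_iff)
qed

lemma nonneg_quadratic_imp_le:
  fixes a b B :: real
  assumes "0 \<le> b" "0 \<le> B" "\<And>z. 0 \<le> a - 2 * z * B + z\<^sup>2 * B * b"
  shows "B \<le> a * b"
proof (cases "b = 0")
  case True
  with assms(3)[of "(a + 1) / (2 * B)"] show ?thesis
    by (cases "B = 0") (auto simp: field_simps)
next
  case False
  with assms(1) assms(3)[of "1 / b"] show ?thesis
    by (simp add: field_simps power2_eq_square)
qed

lemma psd_Cauchy_Schwarz:
  assumes "psd A"
  shows "(cmod (sesq A u v))\<^sup>2 \<le> Re (sesq A u u) * Re (sesq A v v)"
proof -
  define \<beta> where "\<beta> = sesq A u v"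
  have "0 \<le> Re (sesq A u u) - 2 * z * (cmod \<beta>)\<^sup>2 + z\<^sup>2 * (cmod \<beta>)\<^sup>2 * Re (sesq A v v)"
    for z :: real
  proof -
    define c where "c = - of_real z * cnj \<beta>"
    have expand: "sesq A (u + c *s v) (u + c *s v)
        = sesq A u u + c * \<beta> + cnj c * cnj \<beta> + cnj c * c * sesq A v v"
      by (simp add: \<beta>_def psd_sesq_swap[OF assms, of v u] sesq_add_left sesq_add_right
          sesq_scale_left sesq_scale_right algebra_simps)
    have "Re (sesq A (u + c *s v) (u + c *s v))
        = Re (sesq A u u) - 2 * z * (cmod \<beta>)\<^sup>2 + z\<^sup>2 * (cmod \<beta>)\<^sup>2 * Re (sesq A v v)"
      unfolding expand by (unfold c_def cmod_power2) (simp add: algebra_simps power2_eq_square)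
    then show ?thesis
      using psd_sesq_self_nonneg[OF assms, of "u + c *s v"] by linarith
  qed
  then show ?thesis
    unfolding \<beta>_def
    by (intro nonneg_quadratic_imp_le psd_sesq_self_nonneg[OF assms] zero_le_power2)
qed

lemma psd_norm_matrix_vector_le:
  assumes "psd P" "0 \<le> K" "\<And>v. Re (sesq P v v) \<le> K * (norm v)\<^sup>2"
  shows "norm (P *v v) \<le> K * norm v"
proof (cases "P *v v = 0")
  case False
  define w where "w = P *v v"
  have "sesq P w v = of_real ((norm w)\<^sup>2)"
    unfolding sesq_conv_mat1[of P] w_def by (rule sesq_mat1_self)
  then have "((norm w)\<^sup>2)\<^sup>2 \<le> Re (sesq P w w) * Re (sesq P v v)"
    using psd_Cauchy_Schwarz[OF assms(1), of w v] by (simp add: norm_power)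
  also have "\<dots> \<le> (K * (norm w)\<^sup>2) * (K * (norm v)\<^sup>2)"
    using assms psd_sesq_self_nonneg[OF assms(1)] by (intro mult_mono) simp_all
  finally have "(norm w)\<^sup>2 * (norm w)\<^sup>2 \<le> (norm w)\<^sup>2 * (K * norm v)\<^sup>2"
    by (simp add: power2_eq_square mult_ac)
  moreover have "0 < (norm w)\<^sup>2"
    using False by (simp add: w_def)
  ultimately have "(norm w)\<^sup>2 \<le> (K * norm v)\<^sup>2"
    using mult_le_cancel_left_pos by blast
  then have "norm w \<le> K * norm v"
    by (rule power2_le_imp_le) (use assms(2) in simp)
  then show ?thesis
    by (simp add: w_def)
qed (use assms(2) in simp)

lemma opnorm_psd_le:
  assumes "psd P" "0 \<le> K" "\<And>v. Re (sesq P v v) \<le> K * (norm v)\<^sup>2"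
  shows "opnorm P \<le> K"
  unfolding opnorm_def by (rule onorm_le) (rule psd_norm_matrix_vector_le[OF assms])

lemma psd_norm_matrix_vector_sq_le:
  assumes "psd G"
  shows "(norm (G *v v))\<^sup>2 \<le> Re (trace G) * Re (sesq G v v)"
proof -
  have "(cmod ((G *v v) $ i))\<^sup>2 \<le> Re (G $ i $ i) * Re (sesq G v v)" for i
    using psd_Cauchy_Schwarz[OF assms, of "axis i 1" v]
    by (simp add: sesq_axis_left matrix_vector_mult_axis_component)
  then have "(\<Sum>i\<in>UNIV. (cmod ((G *v v) $ i))\<^sup>2)
      \<le> (\<Sum>i\<in>UNIV. Re (G $ i $ i) * Re (sesq G v v))"
    by (rule sum_mono)
  then show ?thesis
    unfolding norm_vec_def L2_set_def by (simp add: sum_nonneg trace_def Re_sum sum_distrib_right)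
qed

text \<open>With \<open>q = \<langle>v, Gv\<rangle>\<close>, Cauchy-Schwarz twice gives \<open>q\<^sup>2 \<le> \<parallel>v\<parallel>\<^sup>2 \<parallel>Gv\<parallel>\<^sup>2 \<le> \<parallel>v\<parallel>\<^sup>2 tr G q\<close>.\<close>
lemma psd_sesq_self_le_trace:
  assumes "psd G"
  shows "Re (sesq G v v) \<le> Re (trace G) * (norm v)\<^sup>2"
proof -
  define q where "q = Re (sesq G v v)"
  have q0: "0 \<le> q"
    unfolding q_def using assms by (rule psd_sesq_self_nonneg)
  have "q\<^sup>2 \<le> (cmod (sesq (mat 1) v (G *v v)))\<^sup>2"
    using q0 complex_Re_le_cmod[of "sesq G v v"]
    by (simp add: q_def power_mono sesq_conv_mat1[of G])
  also have "\<dots> \<le> (norm v)\<^sup>2 * (norm (G *v v))\<^sup>2"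
    using psd_Cauchy_Schwarz[OF psd_mat1, of v "G *v v"] by (simp add: sesq_mat1_self)
  also have "\<dots> \<le> (norm v)\<^sup>2 * (Re (trace G) * q)"
    unfolding q_def by (intro mult_left_mono psd_norm_matrix_vector_sq_le assms) simp
  finally have "q * q \<le> q * ((norm v)\<^sup>2 * Re (trace G))"
    by (simp add: power2_eq_square mult_ac)
  then have "q \<le> (norm v)\<^sup>2 * Re (trace G) \<or> q = 0"
    using q0 by (metis mult_le_cancel_left_pos order_le_less)
  then show ?thesis
    using psd_trace_nonneg[OF assms] by (auto simp: q_def mult.commute)
qed

lemma is_POVM_psd: "is_POVM M \<Longrightarrow> psd (M x)"
  by (simp add: is_POVM_def)

lemma is_POVM_sum_sesq:
  assumes "is_POVM M"
  shows "(\<Sum>x\<in>UNIV. Re (sesq (M x) v v)) = (norm v)\<^sup>2"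
proof -
  have "(\<Sum>x\<in>UNIV. Re (sesq (M x) v v)) = Re (sesq (\<Sum>x\<in>UNIV. M x) v v)"
    by (simp add: sesq_sum_matrix)
  also have "\<dots> = (norm v)\<^sup>2"
    using assms by (simp add: is_POVM_def sesq_mat1_self)
  finally show ?thesis .
qed

lemma is_POVM_sesq_le:
  assumes "is_POVM M"
  shows "Re (sesq (M x) v v) \<le> (norm v)\<^sup>2"
proof -
  have "Re (sesq (M x) v v) \<le> (\<Sum>x'\<in>UNIV. Re (sesq (M x') v v))"
    using assms by (intro member_le_sum) (simp_all add: is_POVM_psd psd_sesq_self_nonneg)
  then show ?thesis
    by (simp only: is_POVM_sum_sesq[OF assms])
qed

lemma is_POVM_trace:
  fixes M :: "'x::finite \<Rightarrow> complex^'n::finite^'n"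
  assumes "is_POVM M"
  shows "(\<Sum>x\<in>UNIV. Re (trace (M x))) = real CARD('n)"
proof -
  have "(\<Sum>x\<in>UNIV. Re (trace (M x))) = Re (trace (\<Sum>x\<in>UNIV. M x))"
    by (simp add: trace_sum)
  also have "\<dots> = real CARD('n)"
    using assms by (simp add: is_POVM_def trace_I)
  finally show ?thesis .
qed

lemma sesq_le_noisy_mixture:
  assumes "psd N" "0 \<le> t"
  shows "Re (sesq M v v) \<le> (1 + t) * Re (sesq ((1 / (1 + t)) *\<^sub>R (M + t *\<^sub>R N)) v v)"
  using assms psd_sesq_self_nonneg[OF assms(1), of v]
  by (simp add: sesq_scaleR_matrix sesq_add_matrix)

lemma sum_row_plus_sum_column_le:
  fixes g :: "'x::finite \<times> 'y::finite \<Rightarrow> real"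
  assumes "\<And>p. 0 \<le> g p"
  shows "(\<Sum>y'\<in>UNIV. g (x, y')) + (\<Sum>x'\<in>UNIV. g (x', y)) \<le> g (x, y) + (\<Sum>p\<in>UNIV. g p)"
proof -
  have "(\<Sum>p\<in>UNIV. g p) = (\<Sum>x'\<in>UNIV. \<Sum>y'\<in>UNIV. g (x', y'))"
    by (simp add: sum.cartesian_product)
  also have "\<dots> = (\<Sum>y'\<in>UNIV. g (x, y')) + (\<Sum>x'\<in>UNIV - {x}. \<Sum>y'\<in>UNIV. g (x', y'))"
    by (rule sum.remove) simp_all
  moreover have "(\<Sum>x'\<in>UNIV. g (x', y)) = g (x, y) + (\<Sum>x'\<in>UNIV - {x}. g (x', y))"
    by (rule sum.remove) simp_all
  moreover have "(\<Sum>x'\<in>UNIV - {x}. g (x', y)) \<le> (\<Sum>x'\<in>UNIV - {x}. \<Sum>y'\<in>UNIV. g (x', y'))"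
    by (intro sum_mono member_le_sum) (simp_all add: assms)
  ultimately show ?thesis by linarith
qed

lemma opnorm_add_le_joint:
  fixes G :: "'x::finite \<times> 'y::finite \<Rightarrow> complex^'n::finite^'n"
  assumes "psd A" "psd B" "is_POVM G" "0 \<le> t"
    and row: "\<And>v. Re (sesq A v v) \<le> (1 + t) * (\<Sum>y'\<in>UNIV. Re (sesq (G (x, y')) v v))"
    and column: "\<And>v. Re (sesq B v v) \<le> (1 + t) * (\<Sum>x'\<in>UNIV. Re (sesq (G (x', y)) v v))"
  shows "opnorm (A + B) \<le> (1 + t) * (1 + Re (trace (G (x, y))))"
proof (rule opnorm_psd_le)
  show "psd (A + B)"
    using assms by (simp add: psd_add)
  show "0 \<le> (1 + t) * (1 + Re (trace (G (x, y))))"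
    using assms by (simp add: psd_trace_nonneg is_POVM_psd)
  fix v
  have "Re (sesq (A + B) v v)
      \<le> (1 + t) * ((\<Sum>y'\<in>UNIV. Re (sesq (G (x, y')) v v)) + (\<Sum>x'\<in>UNIV. Re (sesq (G (x', y)) v v)))"
    using row[of v] column[of v] by (simp add: sesq_add_matrix distrib_left)
  also have "\<dots> \<le> (1 + t) * (Re (sesq (G (x, y)) v v) + (norm v)\<^sup>2)"
    using assms sum_row_plus_sum_column_le[of "\<lambda>p. Re (sesq (G p) v v)" x y]
    by (intro mult_left_mono) (simp_all add: is_POVM_sum_sesq is_POVM_psd psd_sesq_self_nonneg)
  also have "\<dots> \<le> (1 + t) * (Re (trace (G (x, y))) * (norm v)\<^sup>2 + (norm v)\<^sup>2)"
    using assms by (intro mult_left_mono add_right_mono psd_sesq_self_le_trace is_POVM_psd) simp_all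
  finally show "Re (sesq (A + B) v v) \<le> (1 + t) * (1 + Re (trace (G (x, y)))) * (norm v)\<^sup>2"
    by (simp add: algebra_simps)
qed

definition noisy_compatible ::
  "('x::finite \<Rightarrow> complex^'n::finite^'n) \<Rightarrow> ('y::finite \<Rightarrow> complex^'n^'n) \<Rightarrow> real \<Rightarrow> bool" where
  "noisy_compatible M1 M2 t \<longleftrightarrow>
     (\<exists>(N1 :: 'x \<Rightarrow> complex^'n^'n) (N2 :: 'y \<Rightarrow> complex^'n^'n).
        is_POVM N1 \<and> is_POVM N2 \<and>
        compatible (\<lambda>x. (1 / (1 + t)) *\<^sub>R (M1 x + t *\<^sub>R N1 x))
                   (\<lambda>y. (1 / (1 + t)) *\<^sub>R (M2 y + t *\<^sub>R N2 y)))"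

lemma incomp_robustness_eq_Inf_noisy_compatible:
  "incomp_robustness M1 M2 = Inf {t. 0 \<le> t \<and> noisy_compatible M1 M2 t}"
  by (simp add: incomp_robustness_def noisy_compatible_def)

lemma sum_opnorm_le_of_noisy_compatible:
  fixes M1 :: "'x::finite \<Rightarrow> complex^'n::finite^'n" and M2 :: "'y::finite \<Rightarrow> complex^'n^'n"
  assumes "is_POVM M1" "is_POVM M2" "0 \<le> t" "noisy_compatible M1 M2 t"
  shows "(\<Sum>x\<in>UNIV. \<Sum>y\<in>UNIV. opnorm (M1 x + M2 y))
           \<le> (1 + t) * (real CARD('n) + real CARD('x) * real CARD('y))"
proof -
  obtain N1 N2 where N: "is_POVM N1" "is_POVM N2"
    and "compatible (\<lambda>x. (1 / (1 + t)) *\<^sub>R (M1 x + t *\<^sub>R N1 x))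
                    (\<lambda>y. (1 / (1 + t)) *\<^sub>R (M2 y + t *\<^sub>R N2 y))"
    using assms(4) unfolding noisy_compatible_def by blast
  then obtain G :: "'x \<times> 'y \<Rightarrow> complex^'n^'n" where G: "is_POVM G"
    and row: "\<And>x. (\<Sum>y\<in>UNIV. G (x, y)) = (1 / (1 + t)) *\<^sub>R (M1 x + t *\<^sub>R N1 x)"
    and column: "\<And>y. (\<Sum>x\<in>UNIV. G (x, y)) = (1 / (1 + t)) *\<^sub>R (M2 y + t *\<^sub>R N2 y)"
    unfolding compatible_def by blast
  have entry: "opnorm (M1 x + M2 y) \<le> (1 + t) * (1 + Re (trace (G (x, y))))" for x y
  proof (rule opnorm_add_le_joint[OF is_POVM_psd[OF assms(1)] is_POVM_psd[OF assms(2)] G assms(3)])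
    show "Re (sesq (M1 x) v v) \<le> (1 + t) * (\<Sum>y'\<in>UNIV. Re (sesq (G (x, y')) v v))" for v
      using sesq_le_noisy_mixture[OF is_POVM_psd[OF N(1), of x] assms(3), of "M1 x" v]
      by (simp add: row[symmetric] sesq_sum_matrix)
    show "Re (sesq (M2 y) v v) \<le> (1 + t) * (\<Sum>x'\<in>UNIV. Re (sesq (G (x', y)) v v))" for v
      using sesq_le_noisy_mixture[OF is_POVM_psd[OF N(2), of y] assms(3), of "M2 y" v]
      by (simp add: column[symmetric] sesq_sum_matrix)
  qed
  have "(\<Sum>x\<in>UNIV. \<Sum>y\<in>UNIV. opnorm (M1 x + M2 y))
      \<le> (\<Sum>x\<in>UNIV. \<Sum>y\<in>UNIV. (1 + t) * (1 + Re (trace (G (x, y)))))"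
    by (intro sum_mono entry)
  also have "\<dots> = (1 + t) *
      (real CARD('x) * real CARD('y) + (\<Sum>x\<in>UNIV. \<Sum>y\<in>UNIV. Re (trace (G (x, y)))))"
    by (simp add: sum_distrib_left sum.distrib algebra_simps)
  also have "(\<Sum>x\<in>UNIV. \<Sum>y\<in>UNIV. Re (trace (G (x, y)))) = (\<Sum>p\<in>UNIV. Re (trace (G p)))"
    by (simp add: sum.cartesian_product)
  finally show ?thesis
    by (simp add: is_POVM_trace[OF G] algebra_simps)
qed

lemma is_POVM_noise_to_uniform:
  fixes M :: "'x::finite \<Rightarrow> complex^'n::finite^'n"
  assumes "is_POVM M" "0 < t" "real CARD('x) \<le> 1 + t"
  obtains N where "is_POVM N"
    and "\<And>x. (1 / (1 + t)) *\<^sub>R (M x + t *\<^sub>R N x) = (1 / real CARD('x)) *\<^sub>R mat 1"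
proof
  define c where "c = (1 + t) / real CARD('x)"
  have c1: "1 \<le> c"
    using assms by (simp add: c_def)
  define N where "N x = (1 / t) *\<^sub>R (c *\<^sub>R mat 1 - M x)" for x
  have "psd (N x)" for x
  proof -
    have "Re (sesq (M x) v v) \<le> c * (norm v)\<^sup>2" for v
      using is_POVM_sesq_le[OF assms(1), of x v]
        mult_right_mono[OF c1 zero_le_power2[of "norm v"]]
      by simp
    then show ?thesis
      using assms psd_sesq_self_real[OF is_POVM_psd[OF assms(1)]]
      by (simp add: psd_iff_sesq N_def sesq_scaleR_matrix sesq_diff_matrix sesq_mat1_self)
  qed
  moreover have "(\<Sum>x\<in>UNIV. N x) = mat 1"
  proof -
    have "(\<Sum>x\<in>UNIV. N x) = (1 / t) *\<^sub>R ((real CARD('x) * c) *\<^sub>R mat 1 - (\<Sum>x\<in>UNIV. M x))"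
      by (simp add: N_def scaleR_sum_right[symmetric] sum_subtractf sum_constant_scaleR
          del: sum_constant)
    also have "\<dots> = (1 / t) *\<^sub>R ((1 + t) *\<^sub>R mat 1 - mat 1)"
      using assms(1) by (simp add: is_POVM_def c_def)
    also have "\<dots> = (1 / t) *\<^sub>R (t *\<^sub>R mat 1)"
      by (simp add: scaleR_left_distrib)
    finally show ?thesis
      using assms by simp
  qed
  ultimately show "is_POVM N"
    by (simp add: is_POVM_def)
  show "(1 / (1 + t)) *\<^sub>R (M x + t *\<^sub>R N x) = (1 / real CARD('x)) *\<^sub>R mat 1" for x
  proof -
    have "M x + t *\<^sub>R N x = c *\<^sub>R mat 1"
      using assms(2) by (simp add: N_def)
    then show ?thesis
      using assms(2) by (simp add: c_def)
  qed
qed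

lemma compatible_uniform:
  "compatible (\<lambda>x::'x::finite. (1 / real CARD('x)) *\<^sub>R (mat 1 :: complex^'n::finite^'n))
              (\<lambda>y::'y::finite. (1 / real CARD('y)) *\<^sub>R mat 1)"
proof -
  define G :: "'x \<times> 'y \<Rightarrow> complex^'n^'n" where
    "G p = (1 / (real CARD('x) * real CARD('y))) *\<^sub>R mat 1" for p
  have "CARD('x \<times> 'y) = CARD('x) * CARD('y)"
    by (metis UNIV_Times_UNIV card_cartesian_product)
  then have "is_POVM G"
    by (simp add: is_POVM_def G_def psd_scaleR psd_mat1 sum_constant_scaleR del: sum_constant)
  moreover have "(\<Sum>y\<in>UNIV. G (x, y)) = (1 / real CARD('x)) *\<^sub>R mat 1" for x
    by (simp add: G_def sum_constant_scaleR del: sum_constant)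
  moreover have "(\<Sum>x\<in>UNIV. G (x, y)) = (1 / real CARD('y)) *\<^sub>R mat 1" for y
    by (simp add: G_def sum_constant_scaleR del: sum_constant)
  ultimately show ?thesis
    unfolding compatible_def by blast
qed

lemma noisy_compatible_large:
  fixes M1 :: "'x::finite \<Rightarrow> complex^'n::finite^'n" and M2 :: "'y::finite \<Rightarrow> complex^'n^'n"
  assumes "is_POVM M1" "is_POVM M2" "0 < t" "real CARD('x) \<le> 1 + t" "real CARD('y) \<le> 1 + t"
  shows "noisy_compatible M1 M2 t"
proof -
  obtain N1 where "is_POVM N1"
    and uniform1: "\<And>x. (1 / (1 + t)) *\<^sub>R (M1 x + t *\<^sub>R N1 x) = (1 / real CARD('x)) *\<^sub>R mat 1"
    using is_POVM_noise_to_uniform[OF assms(1,3,4)] by blast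
  moreover obtain N2 where "is_POVM N2"
    and uniform2: "\<And>y. (1 / (1 + t)) *\<^sub>R (M2 y + t *\<^sub>R N2 y) = (1 / real CARD('y)) *\<^sub>R mat 1"
    using is_POVM_noise_to_uniform[OF assms(2,3,5)] by blast
  moreover have "compatible (\<lambda>x. (1 / (1 + t)) *\<^sub>R (M1 x + t *\<^sub>R N1 x))
                            (\<lambda>y. (1 / (1 + t)) *\<^sub>R (M2 y + t *\<^sub>R N2 y))"
    by (simp only: uniform1 uniform2) (rule compatible_uniform)
  ultimately show ?thesis
    unfolding noisy_compatible_def by blast
qed

lemma incomp_robustness_ge:
  fixes M1 :: "'x::finite \<Rightarrow> complex^'n::finite^'n" and M2 :: "'y::finite \<Rightarrow> complex^'n^'n"
  assumes "is_POVM M1" "is_POVM M2" "\<And>t. 0 \<le> t \<Longrightarrow> noisy_compatible M1 M2 t \<Longrightarrow> b \<le> t"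
  shows "b \<le> incomp_robustness M1 M2"
  unfolding incomp_robustness_eq_Inf_noisy_compatible
proof (rule cInf_greatest)
  let ?t = "real CARD('x) + real CARD('y)"
  have "noisy_compatible M1 M2 ?t"
    using assms(1,2) by (rule noisy_compatible_large) (simp_all add: add_pos_pos)
  then have "?t \<in> {t. 0 \<le> t \<and> noisy_compatible M1 M2 t}"
    by simp
  then show "{t. 0 \<le> t \<and> noisy_compatible M1 M2 t} \<noteq> {}"
    by blast
qed (use assms(3) in blast)

theorem mainTheorem6:
  fixes M1 :: "'x::finite \<Rightarrow> complex^'d::finite^'d"
    and M2 :: "'y::finite \<Rightarrow> complex^'d^'d"
  assumes "is_POVM M1" and "is_POVM M2"
  shows "incomp_robustness M1 M2 \<ge>
    2 * real CARD('x) * real CARD('y) * avg_Pbar M1 M2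
      / (real CARD('d) + real CARD('x) * real CARD('y)) - 1"
proof (rule incomp_robustness_ge[OF assms])
  fix t :: real
  assume "0 \<le> t" "noisy_compatible M1 M2 t"
  have "2 * real CARD('x) * real CARD('y) * avg_Pbar M1 M2
      = (\<Sum>x\<in>UNIV. \<Sum>y\<in>UNIV. opnorm (M1 x + M2 y))"
    by (simp add: avg_Pbar_def)
  also have "\<dots> \<le> (1 + t) * (real CARD('d) + real CARD('x) * real CARD('y))"
    using sum_opnorm_le_of_noisy_compatible[OF assms \<open>0 \<le> t\<close> \<open>noisy_compatible M1 M2 t\<close>] .
  finally show "2 * real CARD('x) * real CARD('y) * avg_Pbar M1 M2
      / (real CARD('d) + real CARD('x) * real CARD('y)) - 1 \<le> t"
    by (simp add: pos_divide_le_eq add_pos_pos algebra_simps)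
qed

end
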